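(* Let $\Bbbk$ be a field, $m\in\mathbb N$, $K=\Bbbk[\sigma]/(\sigma^m)$ and $L=\Bbbk[\varepsilon]/(\varepsilon^{2m})$, with $K$ viewed as a subalgebra of $L$ via $\sigma=\varepsilon^2$. For $0\le j\le m$ let $K_j=K/(\sigma^j)$. Let $V$ be a $K$-module and $\tilde\theta:V\to L$ an injective $K$-linear map whose adjoint $L$-linear map $\theta:L\otimes_K V\to L$ is surjective. Then there exists $0\le j\le m$ such that $V\cong K\oplus K_j$. *)

theory Defs
  imports "HOL-Computational_Algebra.Polynomial"
begin

text \<open>The algebra \<open>k[x]/(x^n)\<close> is modelled by the
  polynomials of degree \<open>< n\<close> (its canonical representatives); \<open>trunc n p\<close> is
  the canonical representative of the class of \<open>p\<close>.\<close>

definition trunc :: "nat \<Rightarrow> 'k::field poly \<Rightarrow> 'k poly" where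
  "trunc n p = p mod monom 1 n"

definition reduced :: "nat \<Rightarrow> 'k::field poly \<Rightarrow> bool" where
  "reduced n p \<longleftrightarrow> trunc n p = p"

text \<open>The K-module K (+) K_j, with carrier pairs of reduced polynomials; sigma acts by
  multiplication by x followed by truncation, and k acts by scalar multiplication.\<close>

definition KKj :: "nat \<Rightarrow> nat \<Rightarrow> ('k::field poly \<times> 'k poly) set" where
  "KKj m j = {(a, b). reduced m a \<and> reduced j b}"

definition sigma_KKj :: "nat \<Rightarrow> nat \<Rightarrow> 'k::field poly \<times> 'k poly \<Rightarrow> 'k poly \<times> 'k poly" where
  "sigma_KKj m j ab = (trunc m (pCons 0 (fst ab)), trunc j (pCons 0 (snd ab)))"

text \<open>A K-module V is a k-vector space (given by \<open>scale\<close>) together with the action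
  \<open>T\<close> of sigma, a k-linear endomorphism with \<open>T^m = 0\<close>.
  \<open>V \<cong> K (+) K_j\<close> as K-modules: a k-linear bijection onto \<open>KKj m j\<close> intertwining
  \<open>T\<close> with the sigma-action.\<close>

definition iso_KKj ::
  "('k::field \<Rightarrow> 'v::ab_group_add \<Rightarrow> 'v) \<Rightarrow> ('v \<Rightarrow> 'v) \<Rightarrow> nat \<Rightarrow> nat \<Rightarrow> bool" where
  "iso_KKj scale T m j \<longleftrightarrow>
     (\<exists>\<phi> :: 'v \<Rightarrow> 'k poly \<times> 'k poly.
        bij_betw \<phi> UNIV (KKj m j) \<and>
        (\<forall>u v. \<phi> (u + v) = (fst (\<phi> u) + fst (\<phi> v), snd (\<phi> u) + snd (\<phi> v))) \<and>
        (\<forall>c v. \<phi> (scale c v) = (smult c (fst (\<phi> v)), smult c (snd (\<phi> v)))) \<and>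
        (\<forall>v. \<phi> (T v) = sigma_KKj m j (\<phi> v)))"

text \<open>K-linear map \<open>\<theta>~ : V \<rightarrow> L\<close>, with \<open>\<sigma>\<close> acting on L as multiplication by \<open>\<epsilon>^2\<close>.\<close>

definition K_linear_to_L ::
  "('k::field \<Rightarrow> 'v::ab_group_add \<Rightarrow> 'v) \<Rightarrow> ('v \<Rightarrow> 'v) \<Rightarrow> nat \<Rightarrow> ('v \<Rightarrow> 'k poly) \<Rightarrow> bool" where
  "K_linear_to_L scale T m th \<longleftrightarrow>
     (\<forall>v. reduced (2*m) (th v)) \<and>
     (\<forall>u v. th (u + v) = th u + th v) \<and>
     (\<forall>c v. th (scale c v) = smult c (th v)) \<and>
     (\<forall>v. th (T v) = trunc (2*m) (monom 1 2 * th v))"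

text \<open>Surjectivity of the adjoint \<open>\<theta> : L \<otimes>_K V \<rightarrow> L\<close>, \<open>\<ell> \<otimes> v \<mapsto> \<ell> \<theta>~(v)\<close>:
  its image consists of the finite sums \<open>\<Sum> \<ell>_i \<theta>~(v_i)\<close> (computed in L).\<close>

definition adjoint_surj :: "nat \<Rightarrow> ('v \<Rightarrow> 'k::field poly) \<Rightarrow> bool" where
  "adjoint_surj m th \<longleftrightarrow>
     (\<forall>y. reduced (2*m) y \<longrightarrow>
        (\<exists>xs :: ('k poly \<times> 'v) list.
           y = trunc (2*m) (\<Sum>(l, v)\<leftarrow>xs. l * th v)))"

end

theory Submission
  imports Defs
begin

text \<open>Some \<open>\<theta>~(v\<^sub>0)\<close> is a unit of \<open>L\<close>, since otherwise the image of \<open>\<theta>\<close> would lie in the maximal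
  ideal \<open>(\<epsilon>)\<close>; dividing \<open>\<theta>~\<close> by it, \<open>V\<close> becomes isomorphic to a \<open>K\<close>-submodule \<open>W \<subseteq> L\<close>
  containing \<open>1\<close>, hence containing \<open>K\<close>. As a \<open>K\<close>-module \<open>L = K \<oplus> \<epsilon>K\<close>, so \<open>W = K \<oplus> \<epsilon>B\<close> with
  \<open>B = {b. \<epsilon>b \<in> W}\<close> an ideal of \<open>K = \<Bbbk>[\<sigma>]/(\<sigma>\<^sup>m)\<close>. Such an ideal is \<open>\<sigma>\<^sup>iK \<cong> K\<^sub>m\<^sub>-\<^sub>i\<close>, which gives
  \<open>V \<cong> K \<oplus> K\<^sub>m\<^sub>-\<^sub>i\<close>.\<close>

lemma coeff_trunc: "coeff (trunc n p) k = (if k < n then coeff p k else 0)"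
proof (cases "k < n")
  case True
  have "coeff p k = coeff (p div monom 1 n * monom 1 n) k + coeff (trunc n p) k"
    by (metis coeff_add div_mult_mod_eq trunc_def)
  with True show ?thesis by (simp add: mult.commute[of _ "monom 1 n"] coeff_monom_mult)
next
  case False
  have "trunc n p = 0 \<or> degree (trunc n p) < n"
    using degree_mod_less[of "monom (1::'a) n" p] by (auto simp: trunc_def degree_monom_eq)
  with False show ?thesis by (auto intro: coeff_eq_0)
qed

lemma reduced_iff_coeff: "reduced n p \<longleftrightarrow> (\<forall>k\<ge>n. coeff p k = 0)"
  unfolding reduced_def by (auto simp: poly_eq_iff coeff_trunc)

lemma reduced_trunc [simp]: "reduced n (trunc n p)"
  by (simp add: reduced_iff_coeff coeff_trunc)

lemma reduced_vanishing_eq_0: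
  assumes "reduced n y" and "\<forall>k<t. coeff y k = 0" and "n \<le> t"
  shows "y = 0"
proof -
  have "coeff y k = 0" for k
    using assms by (cases "k < t") (auto simp: reduced_iff_coeff)
  then show ?thesis by (simp add: poly_eq_iff)
qed

lemma trunc_add: "trunc n (p + q) = trunc n p + trunc n q"
  by (simp add: trunc_def poly_mod_add_left)

lemma trunc_smult: "trunc n (smult c p) = smult c (trunc n p)"
  by (simp add: trunc_def mod_smult_left)

lemma trunc_mult_trunc_right: "trunc n (p * trunc n q) = trunc n (p * q)"
  by (simp add: trunc_def mod_mult_right_eq)

lemma trunc_mult_trunc_left: "trunc n (trunc n p * q) = trunc n (p * q)"
  by (simp add: trunc_def mod_mult_left_eq)

text \<open>A \<open>k[x^d]\<close>-submodule of \<open>k[x]/(x^n)\<close>; for \<open>d = 1\<close> these are the ideals.\<close>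

definition trunc_submodule :: "nat \<Rightarrow> nat \<Rightarrow> 'k::field poly set \<Rightarrow> bool" where
  "trunc_submodule n d S \<longleftrightarrow>
     (\<forall>p\<in>S. reduced n p) \<and> 0 \<in> S \<and> (\<forall>p\<in>S. \<forall>q\<in>S. p + q \<in> S) \<and>
     (\<forall>c. \<forall>p\<in>S. smult c p \<in> S) \<and> (\<forall>p\<in>S. trunc n (monom 1 d * p) \<in> S)"

lemma trunc_submoduleD:
  assumes "trunc_submodule n d S"
  shows "p \<in> S \<Longrightarrow> reduced n p" and "0 \<in> S" and "p \<in> S \<Longrightarrow> q \<in> S \<Longrightarrow> p + q \<in> S"
    and "p \<in> S \<Longrightarrow> smult c p \<in> S" and "p \<in> S \<Longrightarrow> trunc n (monom 1 d * p) \<in> S"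
  using assms by (auto simp: trunc_submodule_def)

lemma trunc_submodule_1_fill:
  fixes S :: "'k::field poly set"
  assumes S: "trunc_submodule n 1 S"
    and "b \<in> S" and bi: "coeff b i \<noteq> 0" and bz: "\<forall>k<i. coeff b k = 0"
    and "reduced n y" and "\<forall>k<i. coeff y k = 0"
  shows "y \<in> S"
proof -
  have shift_b: "trunc n (monom 1 t * b) \<in> S" for t
  proof (induction t)
    case 0
    then show ?case using trunc_submoduleD(1)[OF S \<open>b \<in> S\<close>] \<open>b \<in> S\<close> by (simp add: reduced_def)
  next
    case (Suc t)
    have "trunc n (monom 1 1 * trunc n (monom 1 t * b)) = trunc n (monom 1 (Suc t) * b)"
      by (simp add: trunc_mult_trunc_right mult_monom mult.assoc[symmetric])
    with trunc_submoduleD(5)[OF S Suc] show ?case by simp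
  qed
  \<comment> \<open>Descending induction on the order \<open>t\<close>: cancel the coefficient at \<open>t\<close> with \<open>x^(t-i) b\<close>.\<close>
  have "\<forall>y. reduced n y \<and> (\<forall>k<t. coeff y k = 0) \<longrightarrow> y \<in> S" if "i \<le> t" for t :: nat
    using that
  proof (induction "n - t" arbitrary: t rule: less_induct)
    case less
    show ?case
    proof (intro allI impI)
      fix y :: "'k poly" assume y: "reduced n y \<and> (\<forall>k<t. coeff y k = 0)"
      show "y \<in> S"
      proof (cases "t < n")
        case False
        with y have "y = 0" by (intro reduced_vanishing_eq_0[of n y t]) simp_all
        with trunc_submoduleD(2)[OF S] show ?thesis by simp
      next
        case True
        define z where "z = trunc n (monom 1 (t - i) * b)"
        have z_low: "coeff z k = 0" if "k < t" for k
          using bz less.prems that by (auto simp: z_def coeff_trunc coeff_monom_mult)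
        have z_t: "coeff z t = coeff b i"
          using True less.prems by (simp add: z_def coeff_trunc coeff_monom_mult)
        define c where "c = coeff y t / coeff b i"
        define y' where "y' = y + smult (- c) z"
        have "z \<in> S" using shift_b by (simp add: z_def)
        have "reduced n y'"
          using y trunc_submoduleD(1)[OF S \<open>z \<in> S\<close>] by (simp add: y'_def reduced_iff_coeff)
        moreover have "\<forall>k<Suc t. coeff y' k = 0"
        proof (intro allI impI)
          fix k assume "k < Suc t"
          then consider "k < t" | "k = t" by linarith
          then show "coeff y' k = 0"
            by cases (use y z_low z_t bi in \<open>simp_all add: y'_def c_def\<close>)
        qed
        ultimately have "y' \<in> S"
          using less.hyps[of "Suc t"] True less.prems by simp
        moreover have "y = y' + smult c z" by (simp add: y'_def)
        ultimately show ?thesis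
          using trunc_submoduleD(3,4)[OF S] \<open>z \<in> S\<close> by simp
      qed
    qed
  qed
  then show ?thesis using assms by blast
qed

lemma trunc_submodule_1_classify:
  assumes S: "trunc_submodule n 1 S"
  shows "\<exists>i\<le>n. S = {y. reduced n y \<and> (\<forall>k<i. coeff y k = 0)}"
proof -
  define P where "P t \<longleftrightarrow> t \<le> n \<and> (\<forall>b\<in>S. \<forall>k<t. coeff b k = 0)" for t
  define i where "i = (GREATEST t. P t)"
  have "P i" unfolding i_def by (rule GreatestI_nat[of P 0 n]) (auto simp: P_def)
  have i_max: "t \<le> i" if "P t" for t
    unfolding i_def by (rule Greatest_le_nat[of P t n]) (use that in \<open>auto simp: P_def\<close>)
  have "y \<in> S" if y: "reduced n y" "\<forall>k<i. coeff y k = 0" for y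
  proof (cases "i = n")
    case True
    with y have "y = 0" by (intro reduced_vanishing_eq_0[of n y i]) simp_all
    with trunc_submoduleD(2)[OF S] show ?thesis by simp
  next
    case False
    obtain b where b: "b \<in> S" "coeff b i \<noteq> 0"
    proof (rule ccontr)
      assume "\<not> thesis"
      with that have "\<forall>b\<in>S. coeff b i = 0" by blast
      with \<open>P i\<close> False have "P (Suc i)" by (auto simp: P_def less_Suc_eq)
      with i_max show False by fastforce
    qed
    with \<open>P i\<close> y show ?thesis using trunc_submodule_1_fill[OF S b] by (simp add: P_def)
  qed
  with \<open>P i\<close> trunc_submoduleD(1)[OF S] show ?thesis by (auto simp: P_def)
qed

lemma trunc_submodule_1_unit:
  assumes S: "trunc_submodule n 1 S" and "trunc n 1 \<in> S"
  shows "S = {y. reduced n y}"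
proof -
  obtain i where "i \<le> n" and Si: "S = {y. reduced n y \<and> (\<forall>k<i. coeff y k = 0)}"
    using trunc_submodule_1_classify[OF S] by blast
  with assms(2) have "i = 0" by (auto simp: coeff_trunc)
  with Si show ?thesis by simp
qed

lemma trunc_inverse:
  assumes "coeff w 0 \<noteq> 0"
  shows "\<exists>u. trunc n (u * w) = trunc n 1"
proof -
  define S where "S = range (\<lambda>y. trunc n (y * w))"
  have S: "trunc_submodule n 1 S"
    unfolding trunc_submodule_def
  proof (intro conjI ballI allI)
    fix p q c assume "p \<in> S" "q \<in> S"
    then obtain y z where p: "p = trunc n (y * w)" and q: "q = trunc n (z * w)"
      by (auto simp: S_def)
    have "p + q = trunc n ((y + z) * w)" by (simp add: p q trunc_add distrib_right)
    then show "p + q \<in> S" unfolding S_def by (metis rangeI)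
    have "smult c p = trunc n (smult c y * w)" by (simp add: p trunc_smult)
    then show "smult c p \<in> S" unfolding S_def by (metis rangeI)
    have "trunc n (monom 1 1 * p) = trunc n ((monom 1 1 * y) * w)"
      by (simp add: p trunc_mult_trunc_right mult.assoc)
    then show "trunc n (monom 1 1 * p) \<in> S" unfolding S_def by (metis rangeI)
  next
    have "0 = trunc n (0 * w)" by (simp add: trunc_def)
    then show "0 \<in> S" unfolding S_def by blast
  qed (auto simp: S_def)
  obtain i where "i \<le> n" and Si: "S = {y. reduced n y \<and> (\<forall>k<i. coeff y k = 0)}"
    using trunc_submodule_1_classify[OF S] by blast
  have "trunc n w \<in> S" by (metis S_def mult_1 rangeI)
  with Si assms \<open>i \<le> n\<close> have "i = 0" by (auto simp: coeff_trunc)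
  with Si have "trunc n 1 \<in> S" by simp
  then show ?thesis by (auto simp: S_def)
qed

lemma trunc_mult_cancel:
  assumes "trunc n (u * w) = trunc n 1" and "reduced n y"
  shows "trunc n (w * trunc n (u * y)) = y"
proof -
  have "trunc n (w * trunc n (u * y)) = trunc n (trunc n (u * w) * y)"
    by (simp add: trunc_mult_trunc_right trunc_mult_trunc_left ac_simps)
  also have "\<dots> = y"
    using assms by (simp add: trunc_mult_trunc_left reduced_def)
  finally show ?thesis .
qed

text \<open>With \<open>\<sigma> = \<epsilon>\<^sup>2\<close>, \<open>L = K \<oplus> \<epsilon>K\<close> as \<open>K\<close>-modules: \<open>even_emb\<close> and \<open>odd_emb\<close> send \<open>\<sigma>\<^sup>k\<close> to
  \<open>\<epsilon>\<^sup>2\<^sup>k\<close> and \<open>\<epsilon>\<^sup>2\<^sup>k\<^sup>+\<^sup>1\<close>; \<open>even_part\<close> and \<open>odd_part\<close> are the projections, the latter read off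
  from \<open>\<epsilon>\<^sup>2\<^sup>i\<^sup>+\<^sup>1\<close> onwards and cut off after \<open>j\<close> terms.\<close>

definition even_emb :: "nat \<Rightarrow> 'k::field poly \<Rightarrow> 'k poly" where
  "even_emb m a = (\<Sum>k<m. monom (coeff a k) (2*k))"

definition odd_emb :: "nat \<Rightarrow> 'k::field poly \<Rightarrow> 'k poly" where
  "odd_emb m b = (\<Sum>k<m. monom (coeff b k) (2*k+1))"

definition even_part :: "nat \<Rightarrow> 'k::field poly \<Rightarrow> 'k poly" where
  "even_part m p = (\<Sum>k<m. monom (coeff p (2*k)) k)"

definition odd_part :: "nat \<Rightarrow> nat \<Rightarrow> 'k::field poly \<Rightarrow> 'k poly" where
  "odd_part i j p = (\<Sum>k<j. monom (coeff p (2*(k+i)+1)) k)"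

lemma coeff_even_part: "coeff (even_part m p) k = (if k < m then coeff p (2*k) else 0)"
  by (simp add: even_part_def coeff_sum coeff_monom)

lemma coeff_odd_part: "coeff (odd_part i j p) k = (if k < j then coeff p (2*(k+i)+1) else 0)"
  by (simp add: odd_part_def coeff_sum coeff_monom)

lemma coeff_even_emb:
  "coeff (even_emb m a) n = (if even n \<and> n div 2 < m then coeff a (n div 2) else 0)"
proof -
  have "(\<Sum>k<m. if 2*k = n then coeff a k else 0) = (if even n \<and> n div 2 < m then coeff a (n div 2) else 0)"
    by (cases "even n") (auto elim!: evenE intro!: sum.neutral)
  then show ?thesis by (simp add: even_emb_def coeff_sum coeff_monom)
qed

lemma coeff_odd_emb:
  "coeff (odd_emb m b) n = (if odd n \<and> n div 2 < m then coeff b (n div 2) else 0)"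
proof -
  have "(\<Sum>k<m. if 2*k+1 = n then coeff b k else 0) = (if odd n \<and> n div 2 < m then coeff b (n div 2) else 0)"
    by (cases "odd n") (auto elim!: oddE intro!: sum.neutral)
  then show ?thesis by (simp add: odd_emb_def coeff_sum coeff_monom)
qed

lemma even_emb_add: "even_emb m (a + b) = even_emb m a + even_emb m b"
  and even_emb_smult: "even_emb m (smult c a) = smult c (even_emb m a)"
  and odd_emb_add: "odd_emb m (a + b) = odd_emb m a + odd_emb m b"
  and odd_emb_smult: "odd_emb m (smult c a) = smult c (odd_emb m a)"
  and even_part_add: "even_part m (a + b) = even_part m a + even_part m b"
  and even_part_smult: "even_part m (smult c a) = smult c (even_part m a)"
  and odd_part_add: "odd_part i j (a + b) = odd_part i j a + odd_part i j b"
  and odd_part_smult: "odd_part i j (smult c a) = smult c (odd_part i j a)"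
  by (simp_all add: poly_eq_iff coeff_even_emb coeff_odd_emb coeff_even_part coeff_odd_part)

lemma even_emb_shift:
  "even_emb m (trunc m (monom 1 1 * a)) = trunc (2*m) (monom 1 2 * even_emb m a)"
proof (rule poly_eqI)
  fix n :: nat
  consider q where "n = 2*q" | q where "n = 2*q + 1" by (metis oddE evenE)
  then show "coeff (even_emb m (trunc m (monom 1 1 * a))) n
    = coeff (trunc (2*m) (monom 1 2 * even_emb m a)) n"
    by cases (case_tac q; auto simp: coeff_even_emb coeff_trunc coeff_monom_mult)+
qed

lemma odd_emb_shift:
  "odd_emb m (trunc m (monom 1 1 * b)) = trunc (2*m) (monom 1 2 * odd_emb m b)"
proof (rule poly_eqI)
  fix n :: nat
  consider q where "n = 2*q" | q where "n = 2*q + 1" by (metis oddE evenE)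
  then show "coeff (odd_emb m (trunc m (monom 1 1 * b))) n
    = coeff (trunc (2*m) (monom 1 2 * odd_emb m b)) n"
    by cases (case_tac q; auto simp: coeff_odd_emb coeff_trunc coeff_monom_mult)+
qed

lemma even_odd_decomp:
  "reduced (2*m) p \<Longrightarrow> p = even_emb m (even_part m p) + odd_emb m (odd_part 0 m p)"
  by (rule poly_eqI)
    (auto simp: reduced_iff_coeff coeff_even_emb coeff_odd_emb coeff_even_part coeff_odd_part
      elim!: evenE oddE)

lemma trunc_submodule_vimage:
  assumes W: "trunc_submodule n' d' W"
    and f_add: "\<And>a b. f (a + b) = f a + f b"
    and f_smult: "\<And>c a. f (smult c a) = smult c (f a)"
    and f_shift: "\<And>a. f (trunc n (monom 1 d * a)) = trunc n' (monom 1 d' * f a)"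
  shows "trunc_submodule n d {a. reduced n a \<and> f a \<in> W}"
proof -
  have "f 0 = 0" using f_smult[of 0 0] by simp
  moreover have "reduced n 0" "reduced n a \<Longrightarrow> reduced n b \<Longrightarrow> reduced n (a + b)"
    "reduced n a \<Longrightarrow> reduced n (smult c a)" for a b c
    by (simp_all add: reduced_iff_coeff)
  ultimately show ?thesis
    using trunc_submoduleD[OF W] by (auto simp: trunc_submodule_def f_add f_smult f_shift)
qed

lemma even_emb_trunc_1: "even_emb m (trunc m 1) = trunc (2*m) 1"
  by (rule poly_eqI) (auto simp: coeff_even_emb coeff_trunc coeff_1 elim!: evenE)

lemma even_emb_in_trunc_submodule:
  assumes W: "trunc_submodule (2*m) 2 W" and "trunc (2*m) 1 \<in> W" and "reduced m a"
  shows "even_emb m a \<in> W"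
proof -
  define S where "S = {a. reduced m a \<and> even_emb m a \<in> W}"
  have S: "trunc_submodule m 1 S"
    unfolding S_def by (rule trunc_submodule_vimage[OF W even_emb_add even_emb_smult even_emb_shift])
  have "trunc m 1 \<in> S" using assms(2) by (simp add: S_def even_emb_trunc_1)
  then have "a \<in> S" using trunc_submodule_1_unit[OF S] assms(3) by simp
  then show ?thesis by (simp add: S_def)
qed

text \<open>The \<open>K\<close>-submodule \<open>K \<oplus> \<epsilon>\<sigma>\<^sup>iK\<close> of \<open>L\<close>.\<close>

definition even_odd_submodule :: "nat \<Rightarrow> nat \<Rightarrow> 'k::field poly set" where
  "even_odd_submodule m i = {p. reduced (2*m) p \<and> (\<forall>k<i. coeff p (2*k+1) = 0)}"

lemma trunc_submodule_2_eq_even_odd_submodule: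
  assumes W: "trunc_submodule (2*m) 2 W" and one: "trunc (2*m) 1 \<in> W"
  shows "\<exists>i\<le>m. W = even_odd_submodule m i"
proof -
  define B where "B = {b. reduced m b \<and> odd_emb m b \<in> W}"
  have "trunc_submodule m 1 B"
    unfolding B_def by (rule trunc_submodule_vimage[OF W odd_emb_add odd_emb_smult odd_emb_shift])
  then obtain i where "i \<le> m" and B: "B = {b. reduced m b \<and> (\<forall>k<i. coeff b k = 0)}"
    using trunc_submodule_1_classify by blast
  have "p \<in> W \<longleftrightarrow> reduced (2*m) p \<and> (\<forall>k<i. coeff p (2*k+1) = 0)" for p
  proof (cases "reduced (2*m) p")
    case True
    define e where "e = even_emb m (even_part m p)"
    define q where "q = odd_part 0 m p"
    have "e \<in> W" unfolding e_def
      by (rule even_emb_in_trunc_submodule[OF W one]) (simp add: reduced_iff_coeff coeff_even_part)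
    have p: "p = e + odd_emb m q" unfolding e_def q_def by (rule even_odd_decomp[OF True])
    have "p \<in> W \<longleftrightarrow> odd_emb m q \<in> W"
    proof
      assume "p \<in> W"
      with \<open>e \<in> W\<close> have "p + smult (-1) e \<in> W" using trunc_submoduleD(3,4)[OF W] by blast
      then show "odd_emb m q \<in> W" by (simp add: p)
    qed (use \<open>e \<in> W\<close> p trunc_submoduleD(3)[OF W] in auto)
    also have "\<dots> \<longleftrightarrow> q \<in> B" by (simp add: B_def q_def reduced_iff_coeff coeff_odd_part)
    also have "\<dots> \<longleftrightarrow> (\<forall>k<i. coeff p (2*k+1) = 0)"
      using \<open>i \<le> m\<close> by (auto simp: B q_def reduced_iff_coeff coeff_odd_part)
    finally show ?thesis using True by simp
  qed (use trunc_submoduleD(1)[OF W] in auto)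
  with \<open>i \<le> m\<close> show ?thesis by (auto simp: even_odd_submodule_def)
qed

definition even_odd_split :: "nat \<Rightarrow> nat \<Rightarrow> 'k::field poly \<Rightarrow> 'k poly \<times> 'k poly" where
  "even_odd_split m i p = (even_part m p, odd_part i (m - i) p)"

lemma bij_betw_even_odd_split:
  assumes "i \<le> m"
  shows "bij_betw (even_odd_split m i) (even_odd_submodule m i) (KKj m (m - i))"
proof -
  define g :: "'a poly \<times> 'a poly \<Rightarrow> 'a poly"
    where "g = (\<lambda>(a, c). even_emb m a + odd_emb m (monom 1 i * c))"
  note coeffs = coeff_even_emb coeff_odd_emb coeff_even_part coeff_odd_part coeff_monom_mult
  have "g (even_odd_split m i p) = p" if "p \<in> even_odd_submodule m i" for p
  proof (rule poly_eqI)
    fix n :: nat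
    consider q where "n = 2*q" | q where "n = 2*q + 1" by (metis evenE oddE)
    then show "coeff (g (even_odd_split m i p)) n = coeff p n"
      by cases (use that assms in \<open>auto simp: g_def even_odd_split_def even_odd_submodule_def
          reduced_iff_coeff coeffs\<close>)
  qed
  moreover have "even_odd_split m i (g (a, c)) = (a, c)" if "(a, c) \<in> KKj m (m - i)" for a c
    using that assms
    by (auto intro!: poly_eqI simp: g_def even_odd_split_def KKj_def reduced_iff_coeff coeffs)
  moreover have "even_odd_split m i ` even_odd_submodule m i \<subseteq> KKj m (m - i)"
    by (auto simp: even_odd_split_def KKj_def reduced_iff_coeff coeff_even_part coeff_odd_part)
  moreover have "g ` KKj m (m - i) \<subseteq> even_odd_submodule m i"
    by (auto simp: g_def even_odd_submodule_def KKj_def reduced_iff_coeff coeffs)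
  ultimately show ?thesis by (intro bij_betw_byWitness[of _ g]) auto
qed

lemma even_odd_split_shift:
  assumes "p \<in> even_odd_submodule m i"
  shows "even_odd_split m i (trunc (2*m) (monom 1 2 * p))
    = sigma_KKj m (m - i) (even_odd_split m i p)"
proof -
  note coeffs = coeff_trunc coeff_monom_mult coeff_pCons coeff_even_part coeff_odd_part
  have "even_part m (trunc (2*m) (monom 1 2 * p)) = trunc m (pCons 0 (even_part m p))"
    by (rule poly_eqI) (case_tac n; simp add: coeffs)
  moreover have "odd_part i (m - i) (trunc (2*m) (monom 1 2 * p))
      = trunc (m - i) (pCons 0 (odd_part i (m - i) p))"
  proof (rule poly_eqI)
    fix k
    \<comment> \<open>At \<open>k = 0\<close> the coefficient of \<open>\<epsilon>\<^sup>2\<^sup>i\<^sup>-\<^sup>1\<close> shows up, which vanishes in \<open>even_odd_submodule m i\<close>.\<close>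
    have "coeff p (2*i - 1) = 0" if "i > 0"
    proof -
      have "2*i - 1 = 2*(i - 1) + 1" using that by simp
      with assms that show ?thesis by (simp add: even_odd_submodule_def)
    qed
    then show "coeff (odd_part i (m - i) (trunc (2*m) (monom 1 2 * p))) k
      = coeff (trunc (m - i) (pCons 0 (odd_part i (m - i) p))) k"
      by (cases k) (auto simp: coeffs)
  qed
  ultimately show ?thesis by (simp add: even_odd_split_def sigma_KKj_def)
qed

lemma iso_KKj_if_range:
  assumes lin: "K_linear_to_L scale T m psi" and "inj psi" and "i \<le> m"
    and range: "range psi = even_odd_submodule m i"
  shows "iso_KKj scale T m (m - i)"
  unfolding iso_KKj_def
proof (intro exI[of _ "even_odd_split m i \<circ> psi"] conjI allI)
  have "bij_betw psi UNIV (even_odd_submodule m i)"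
    using \<open>inj psi\<close> range by (simp add: bij_betw_def)
  then show "bij_betw (even_odd_split m i \<circ> psi) UNIV (KKj m (m - i))"
    using bij_betw_even_odd_split[OF \<open>i \<le> m\<close>] by (rule bij_betw_trans)
  show "(even_odd_split m i \<circ> psi) (T v) = sigma_KKj m (m - i) ((even_odd_split m i \<circ> psi) v)" for v
  proof -
    have "psi v \<in> even_odd_submodule m i" using range by blast
    with lin show ?thesis by (simp add: K_linear_to_L_def even_odd_split_shift)
  qed
qed (use lin in \<open>simp_all add: K_linear_to_L_def even_odd_split_def
    even_part_add odd_part_add even_part_smult odd_part_smult\<close>)

lemma range_trunc_submodule:
  assumes "K_linear_to_L scale T m th"
  shows "trunc_submodule (2*m) 2 (range th)"
proof -
  have add: "th (u + v) = th u + th v" and "th (scale c v) = smult c (th v)"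
    and "th (T v) = trunc (2*m) (monom 1 2 * th v)" and "reduced (2*m) (th v)" for u v c
    using assms by (simp_all add: K_linear_to_L_def)
  moreover have "th 0 = 0" using add[of 0 0] by (metis add.right_neutral add_left_cancel)
  ultimately show ?thesis unfolding trunc_submodule_def
    by (intro conjI ballI allI; (elim rangeE)?; metis rangeI)
qed

lemma K_linear_to_L_mult:
  assumes "K_linear_to_L scale T m th"
  shows "K_linear_to_L scale T m (\<lambda>v. trunc (2*m) (u * th v))"
proof -
  have "trunc (2*m) (u * trunc (2*m) (monom 1 2 * th v))
      = trunc (2*m) (monom 1 2 * trunc (2*m) (u * th v))" for v
    by (simp add: trunc_mult_trunc_right mult.left_commute)
  with assms show ?thesis
    by (simp add: K_linear_to_L_def trunc_add trunc_smult distrib_left)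
qed

lemma adjoint_surj_unit_value:
  assumes "adjoint_surj m th"
  shows "\<exists>v u. trunc (2*m) (u * th v) = trunc (2*m) 1"
proof (cases "m = 0")
  case True
  then show ?thesis by (simp add: trunc_def)
next
  case False
  then have "reduced (2*m) 1" by (simp add: reduced_iff_coeff)
  with assms obtain xs where xs: "1 = trunc (2*m) (\<Sum>(l, v)\<leftarrow>xs. l * th v)"
    by (auto simp: adjoint_surj_def)
  have "coeff (\<Sum>(l, v)\<leftarrow>xs. l * th v) 0 = 0" if "\<forall>v. coeff (th v) 0 = 0"
    using that by (induction xs) (auto simp: coeff_mult_0)
  moreover have "coeff (trunc (2*m) (\<Sum>(l, v)\<leftarrow>xs. l * th v)) 0 = 1"
    by (simp flip: xs)
  then have "coeff (\<Sum>(l, v)\<leftarrow>xs. l * th v) 0 = 1"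
    using False by (simp add: coeff_trunc)
  ultimately obtain v where "coeff (th v) 0 \<noteq> 0" by auto
  then show ?thesis using trunc_inverse by blast
qed

theorem lemma3p3:
  fixes scale :: "'k::field \<Rightarrow> 'v::ab_group_add \<Rightarrow> 'v"
    and T :: "'v \<Rightarrow> 'v"
    and m :: nat
    and th :: "'v \<Rightarrow> 'k poly"
  assumes "vector_space scale"
    and "Vector_Spaces.linear scale scale T"
    and "\<forall>v. (T ^^ m) v = 0"
    and "K_linear_to_L scale T m th"
    and "inj th"
    and "adjoint_surj m th"
  shows "\<exists>j\<le>m. iso_KKj scale T m j"
proof -
  obtain v0 u where u: "trunc (2*m) (u * th v0) = trunc (2*m) 1"
    using adjoint_surj_unit_value[OF assms(6)] by blast
  define psi where "psi v = trunc (2*m) (u * th v)" for v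
  have psi_lin: "K_linear_to_L scale T m psi"
    unfolding psi_def by (rule K_linear_to_L_mult[OF assms(4)])
  have "th v = trunc (2*m) (th v0 * psi v)" for v
    using assms(4) unfolding psi_def K_linear_to_L_def by (simp add: trunc_mult_cancel[OF u])
  then have "inj psi" using \<open>inj th\<close> by (metis injD injI)
  have "trunc (2*m) 1 \<in> range psi" using u by (metis psi_def rangeI)
  then obtain i where "i \<le> m" and "range psi = even_odd_submodule m i"
    using trunc_submodule_2_eq_even_odd_submodule[OF range_trunc_submodule[OF psi_lin]] by blast
  then show ?thesis using iso_KKj_if_range[OF psi_lin \<open>inj psi\<close>] by (metis diff_le_self)
qed

end
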